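(* Let $P$ be a finite poset. For every $k=0,1,\ldots,\#P$, the $k$-chain distribution $\mathrm{chain}(k)$ on the distributive lattice $J(P)$ is toggle-symmetric.
   Context: $J(P)$ is the set of order ideals (down-closed subsets) of $P$ ordered by inclusion. A $k$-chain of $J(P)$ is $I_0\subsetneq I_1\subsetneq\cdots\subsetneq I_k$; $\mathrm{chain}(k)$ gives $I\in J(P)$ probability $\#\{k\text{-chains containing } I\}/((k+1)\#\{k\text{-chains of } J(P)\})$. For $p\in P$ and $I\in J(P)$: $\mathcal{T}^+_p(I)=1$ if $p\notin I$ and $p$ is a minimal element of $P\setminus I$, else $0$; $\mathcal{T}^-_p(I)=1$ if $p\in I$ and $p$ is a maximal element of $I$, else $0$. A distribution $\mu$ on $J(P)$ is toggle-symmetric if $\mathbb{E}(\mu;\mathcal{T}^+_p)=\mathbb{E}(\mu;\mathcal{T}^-_p)$ for all $p\in P$, where $\mathbb{E}(\mu;f)=\sum_I f(I)\mathbb{P}(\mu;I)$. *)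

theory Defs
  imports Complex_Main
begin

definition is_poset :: "'a set \<Rightarrow> ('a \<Rightarrow> 'a \<Rightarrow> bool) \<Rightarrow> bool" where
  "is_poset P le \<longleftrightarrow>
     (\<forall>x\<in>P. le x x) \<and>
     (\<forall>x\<in>P. \<forall>y\<in>P. le x y \<and> le y x \<longrightarrow> x = y) \<and>
     (\<forall>x\<in>P. \<forall>y\<in>P. \<forall>z\<in>P. le x y \<and> le y z \<longrightarrow> le x z)"

definition order_ideals :: "'a set \<Rightarrow> ('a \<Rightarrow> 'a \<Rightarrow> bool) \<Rightarrow> 'a set set" where
  "order_ideals P le = {I. I \<subseteq> P \<and> (\<forall>x\<in>I. \<forall>y\<in>P. le y x \<longrightarrow> y \<in> I)}"

definition k_chains :: "'a set \<Rightarrow> ('a \<Rightarrow> 'a \<Rightarrow> bool) \<Rightarrow> nat \<Rightarrow> 'a set list set" where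
  "k_chains P le k = {cs. length cs = Suc k \<and> set cs \<subseteq> order_ideals P le \<and>
                          sorted_wrt (\<subset>) cs}"

definition chain_prob :: "'a set \<Rightarrow> ('a \<Rightarrow> 'a \<Rightarrow> bool) \<Rightarrow> nat \<Rightarrow> 'a set \<Rightarrow> real" where
  "chain_prob P le k I =
     real (card {cs \<in> k_chains P le k. I \<in> set cs}) /
     (real (Suc k) * real (card (k_chains P le k)))"

definition toggle_plus :: "'a set \<Rightarrow> ('a \<Rightarrow> 'a \<Rightarrow> bool) \<Rightarrow> 'a \<Rightarrow> 'a set \<Rightarrow> real" where
  "toggle_plus P le p I =
     (if p \<in> P \<and> p \<notin> I \<and> (\<forall>q\<in>P - I. le q p \<longrightarrow> q = p) then 1 else 0)"

definition toggle_minus :: "'a set \<Rightarrow> ('a \<Rightarrow> 'a \<Rightarrow> bool) \<Rightarrow> 'a \<Rightarrow> 'a set \<Rightarrow> real" where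
  "toggle_minus P le p I =
     (if p \<in> I \<and> (\<forall>q\<in>I. le p q \<longrightarrow> q = p) then 1 else 0)"

definition expect :: "'a set \<Rightarrow> ('a \<Rightarrow> 'a \<Rightarrow> bool) \<Rightarrow> ('a set \<Rightarrow> real) \<Rightarrow> ('a set \<Rightarrow> real) \<Rightarrow> real" where
  "expect P le mu f = (\<Sum>I\<in>order_ideals P le. f I * mu I)"

definition toggle_symmetric :: "'a set \<Rightarrow> ('a \<Rightarrow> 'a \<Rightarrow> bool) \<Rightarrow> ('a set \<Rightarrow> real) \<Rightarrow> bool" where
  "toggle_symmetric P le mu \<longleftrightarrow>
     (\<forall>p\<in>P. expect P le mu (toggle_plus P le p) = expect P le mu (toggle_minus P le p))"

end

theory Submission
  imports Defs
begin

text \<open>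
  A \<open>k\<close>-chain \<open>I\<^sub>0 \<subset> \<dots> \<subset> I\<^sub>k\<close> of order ideals is encoded by its rank function
  \<open>f x = #{i. x \<notin> I\<^sub>i}\<close>: a monotone map \<open>P \<rightarrow> {0..k+1}\<close> attaining every value in \<open>{1..k}\<close>,
  with \<open>I\<^sub>i = {x. f x \<le> i}\<close>. For a fixed \<open>p\<close>, let \<open>m\<close> be the largest rank strictly below \<open>p\<close>
  (or 0) and \<open>M\<close> the smallest rank strictly above \<open>p\<close> (or \<open>k+1\<close>). Then \<open>p\<close> can be toggled
  into \<open>I\<^sub>i\<close> exactly for \<open>m \<le> i < f p\<close> and out of \<open>I\<^sub>i\<close> exactly for \<open>f p \<le> i < M\<close>, so
  the two expectations are proportional to the sums of \<open>f p - m\<close> and \<open>M - f p\<close> over all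
  rank functions. Reflecting \<open>f p\<close> to \<open>m + M - f p\<close> (and, if \<open>p\<close> is alone on its level,
  closing the gap left behind by shifting the levels in between) is an involution on rank
  functions exchanging these two quantities.
\<close>

lemma k_chains_nth_mono:
  assumes c: "c \<in> k_chains P le k" and "i \<le> j" "j \<le> k"
  shows "c ! i \<subseteq> c ! j"
proof (cases "i = j")
  case False
  have "sorted_wrt (\<subset>) c" "length c = Suc k" using c by (auto simp: k_chains_def)
  with False assms(2,3) show ?thesis using sorted_wrt_nth_less[of "(\<subset>)" c i j] by auto
qed simp

lemma k_chains_nth_psubset:
  assumes c: "c \<in> k_chains P le k" and "i < j" "j \<le> k"
  shows "c ! i \<subset> c ! j"
  using assms sorted_wrt_nth_less[of "(\<subset>)" c i j] by (auto simp: k_chains_def)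

lemma k_chains_nth_in_order_ideals:
  "c \<in> k_chains P le k \<Longrightarrow> i \<le> k \<Longrightarrow> c ! i \<in> order_ideals P le"
  by (auto simp: k_chains_def)

lemma k_chains_distinct:
  assumes "c \<in> k_chains P le k"
  shows "distinct c"
proof -
  have "sorted_wrt (\<subset>) c" using assms by (simp add: k_chains_def)
  then show ?thesis by (induction c) auto
qed

lemma sum_set_k_chain:
  assumes c: "c \<in> k_chains P le k"
  shows "(\<Sum>I\<in>set c. T I) = (\<Sum>i\<le>k. T (c ! i))"
proof -
  have "(\<Sum>I\<in>set c. T I) = sum_list (map T c)"
    using k_chains_distinct[OF c] by (simp add: sum_list_distinct_conv_sum_set)
  also have "\<dots> = (\<Sum>i<length c. T (c ! i))"
    by (simp add: sum_list_sum_nth atLeast0LessThan)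
  finally show ?thesis using c by (simp add: k_chains_def lessThan_Suc_atMost)
qed

lemma finite_order_ideals: "finite P \<Longrightarrow> finite (order_ideals P le)"
  by (rule finite_subset[of _ "Pow P"]) (auto simp: order_ideals_def)

lemma finite_k_chains:
  assumes "finite P"
  shows "finite (k_chains P le k)"
proof -
  have "finite {cs. set cs \<subseteq> order_ideals P le \<and> length cs = Suc k}"
    using finite_order_ideals[OF assms] by (rule finite_lists_length_eq)
  then show ?thesis by (rule finite_subset[rotated]) (auto simp: k_chains_def)
qed

text \<open>Double counting: the weight of \<open>I\<close> under \<open>chain(k)\<close> is the number of chains through \<open>I\<close>.\<close>

lemma expect_chain_prob:
  assumes "finite P"
  shows "expect P le (chain_prob P le k) T =
    (\<Sum>c\<in>k_chains P le k. \<Sum>i\<le>k. T (c ! i)) / (real (Suc k) * real (card (k_chains P le k)))"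
proof -
  let ?C = "k_chains P le k" and ?J = "order_ideals P le"
  have "(\<Sum>I\<in>?J. T I * real (card {c \<in> ?C. I \<in> set c}))
      = (\<Sum>I\<in>?J. \<Sum>c\<in>?C. if I \<in> set c then T I else 0)"
    using finite_k_chains[OF assms]
    by (simp add: sum.inter_filter[symmetric] sum_distrib_left[symmetric] mult.commute)
  also have "\<dots> = (\<Sum>c\<in>?C. \<Sum>I\<in>?J. if I \<in> set c then T I else 0)"
    by (rule sum.swap)
  also have "\<dots> = (\<Sum>c\<in>?C. \<Sum>I\<in>set c. T I)"
  proof (rule sum.cong[OF refl])
    fix c assume "c \<in> ?C"
    then have "{I \<in> ?J. I \<in> set c} = set c" by (auto simp: k_chains_def)
    then show "(\<Sum>I\<in>?J. if I \<in> set c then T I else 0) = (\<Sum>I\<in>set c. T I)"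
      using finite_order_ideals[OF assms] by (simp add: sum.inter_filter[symmetric])
  qed
  finally show ?thesis
    by (simp add: expect_def chain_prob_def sum_divide_distrib[symmetric] sum_set_k_chain)
qed

lemma sum_indicator_atLeastLessThan:
  assumes "finite A" "{a..<b} \<subseteq> A"
  shows "(\<Sum>i\<in>A. if i \<in> {a..<b} then 1 else 0) = real (b - a)"
proof -
  have "(\<Sum>i\<in>A. if i \<in> {a..<b} then 1 else 0) = (\<Sum>i\<in>A \<inter> {a..<b}. 1::real)"
    using assms(1) by (rule sum.inter_restrict[symmetric])
  also have "A \<inter> {a..<b} = {a..<b}" using assms(2) by blast
  finally show ?thesis by simp
qed

text \<open>\<open>move_level v w\<close> is the monotone bijection \<open>\<nat> - {v} \<rightarrow> \<nat> - {w}\<close> that fixes every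
  value outside the interval between \<open>v\<close> and \<open>w\<close>.\<close>

definition move_level :: "nat \<Rightarrow> nat \<Rightarrow> nat \<Rightarrow> nat" where
  "move_level v w y = (if v < y \<and> y \<le> w then y - 1 else if w \<le> y \<and> y < v then y + 1 else y)"

lemma move_level_mono: "a \<le> b \<Longrightarrow> move_level v w a \<le> move_level v w b"
  by (auto simp: move_level_def)

lemma move_level_inverse: "y \<noteq> v \<Longrightarrow> move_level w v (move_level v w y) = y"
  by (auto simp: move_level_def)

lemma move_level_neq: "y \<noteq> v \<Longrightarrow> move_level v w y \<noteq> w"
  by (auto simp: move_level_def)

lemma move_level_le: "y \<le> n \<Longrightarrow> v \<le> n \<Longrightarrow> move_level v w y \<le> n"
  by (auto simp: move_level_def)

lemma move_level_fixed_below: "y < v \<Longrightarrow> y < w \<Longrightarrow> move_level v w y = y"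
  by (auto simp: move_level_def)

lemma move_level_fixed_above: "v < y \<Longrightarrow> w < y \<Longrightarrow> move_level v w y = y"
  by (auto simp: move_level_def)

lemma move_level_surj:
  assumes "j \<noteq> w" "j \<in> {a..b}" "v \<in> {a..b}" "w \<in> {a..b}"
  shows "\<exists>y\<in>{a..b}. y \<noteq> v \<and> move_level v w y = j"
proof -
  define y where
    "y = (if v \<le> j \<and> j < w then j + 1 else if w < j \<and> j \<le> v then j - 1 else j)"
  have "y \<in> {a..b} \<and> y \<noteq> v \<and> move_level v w y = j"
    using assms by (auto simp: y_def move_level_def)
  then show ?thesis by blast
qed

locale finite_ideal_chains =
  fixes P :: "'a set" and le :: "'a \<Rightarrow> 'a \<Rightarrow> bool" and k :: nat
  assumes finite_P: "finite P"
begin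

definition ranks :: "('a \<Rightarrow> nat) set" where
  "ranks = {f. (\<forall>x. x \<notin> P \<longrightarrow> f x = 0) \<and> (\<forall>x\<in>P. f x \<le> Suc k) \<and>
              (\<forall>x\<in>P. \<forall>y\<in>P. le x y \<longrightarrow> f x \<le> f y) \<and> (\<forall>j\<in>{1..k}. \<exists>x\<in>P. f x = j)}"

definition chain_of_rank :: "('a \<Rightarrow> nat) \<Rightarrow> 'a set list" where
  "chain_of_rank f = map (\<lambda>i. {x\<in>P. f x \<le> i}) [0..<Suc k]"

definition rank_of_chain :: "'a set list \<Rightarrow> 'a \<Rightarrow> nat" where
  "rank_of_chain c x = (if x \<in> P then card {i. i \<le> k \<and> x \<notin> c ! i} else 0)"

lemma ranksD:
  assumes "f \<in> ranks"
  shows "x \<notin> P \<Longrightarrow> f x = 0" and "f x \<le> Suc k"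
    and "x \<in> P \<Longrightarrow> y \<in> P \<Longrightarrow> le x y \<Longrightarrow> f x \<le> f y"
    and "j \<in> {1..k} \<Longrightarrow> \<exists>x\<in>P. f x = j"
  using assms unfolding ranks_def by (fastforce, cases "x \<in> P", auto)

lemma chain_of_rank_nth: "i \<le> k \<Longrightarrow> chain_of_rank f ! i = {x\<in>P. f x \<le> i}"
  unfolding chain_of_rank_def by (simp del: upt_Suc)

lemma length_chain_of_rank: "length (chain_of_rank f) = Suc k"
  by (simp add: chain_of_rank_def)

lemma mem_k_chain_iff_rank_le:
  assumes c: "c \<in> k_chains P le k" and "x \<in> P" "i \<le> k"
  shows "x \<in> c ! i \<longleftrightarrow> rank_of_chain c x \<le> i"
proof
  assume "x \<in> c ! i"
  have "t < i" if "t \<le> k" "x \<notin> c ! t" for t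
    using k_chains_nth_mono[OF c, of i t] \<open>x \<in> c ! i\<close> that by (meson not_less subsetD)
  then have "{t. t \<le> k \<and> x \<notin> c ! t} \<subseteq> {..<i}" by blast
  then show "rank_of_chain c x \<le> i"
    using \<open>x \<in> P\<close> card_mono[of "{..<i}"] by (fastforce simp: rank_of_chain_def)
next
  assume rank: "rank_of_chain c x \<le> i"
  show "x \<in> c ! i"
  proof (rule ccontr)
    assume "x \<notin> c ! i"
    then have "{..i} \<subseteq> {t. t \<le> k \<and> x \<notin> c ! t}"
      using k_chains_nth_mono[OF c] \<open>i \<le> k\<close> by auto
    then have "card {..i} \<le> card {t. t \<le> k \<and> x \<notin> c ! t}"
      by (intro card_mono) auto
    then show False using rank \<open>x \<in> P\<close> by (simp add: rank_of_chain_def)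
  qed
qed

lemma chain_of_rank_in_k_chains:
  assumes f: "f \<in> ranks"
  shows "chain_of_rank f \<in> k_chains P le k"
proof -
  have "chain_of_rank f ! i \<subset> chain_of_rank f ! j" if ij: "i < j" "j \<le> k" for i j
  proof -
    obtain x where "x \<in> P" "f x = j" using ranksD(4)[OF f, of j] ij by auto
    with ij have "x \<in> chain_of_rank f ! j" "x \<notin> chain_of_rank f ! i"
      by (auto simp: chain_of_rank_nth)
    moreover have "chain_of_rank f ! i \<subseteq> chain_of_rank f ! j"
      using ij by (auto simp: chain_of_rank_nth)
    ultimately show ?thesis by blast
  qed
  then have "sorted_wrt (\<subset>) (chain_of_rank f)"
    by (simp add: sorted_wrt_iff_nth_less length_chain_of_rank)
  moreover have "set (chain_of_rank f) \<subseteq> order_ideals P le"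
    using ranksD(3)[OF f] by (fastforce simp: chain_of_rank_def order_ideals_def)
  ultimately show ?thesis by (simp add: k_chains_def length_chain_of_rank)
qed

lemma rank_of_chain_in_ranks:
  assumes c: "c \<in> k_chains P le k"
  shows "rank_of_chain c \<in> ranks"
  unfolding ranks_def
proof (intro CollectI conjI allI ballI impI)
  fix x assume "x \<notin> P"
  then show "rank_of_chain c x = 0" by (simp add: rank_of_chain_def)
next
  fix x assume "x \<in> P"
  have "card {i. i \<le> k \<and> x \<notin> c ! i} \<le> card {..k}"
    by (intro card_mono) auto
  then show "rank_of_chain c x \<le> Suc k" by (simp add: rank_of_chain_def)
next
  fix x y assume "x \<in> P" "y \<in> P" "le x y"
  then have "{i. i \<le> k \<and> x \<notin> c ! i} \<subseteq> {i. i \<le> k \<and> y \<notin> c ! i}"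
    using k_chains_nth_in_order_ideals[OF c] by (auto simp: order_ideals_def)
  then have "card {i. i \<le> k \<and> x \<notin> c ! i} \<le> card {i. i \<le> k \<and> y \<notin> c ! i}"
    by (intro card_mono) auto
  then show "rank_of_chain c x \<le> rank_of_chain c y"
    using \<open>x \<in> P\<close> \<open>y \<in> P\<close> by (simp add: rank_of_chain_def)
next
  fix j :: nat assume j: "j \<in> {1..k}"
  then obtain x where x: "x \<in> c ! j" "x \<notin> c ! (j - 1)"
    using k_chains_nth_psubset[OF c, of "j - 1" j] by auto
  then have "x \<in> P"
    using k_chains_nth_in_order_ideals[OF c, of j] j by (auto simp: order_ideals_def)
  moreover have "j - 1 \<le> k" "j \<le> k" using j by auto
  ultimately have "rank_of_chain c x = j"
    using mem_k_chain_iff_rank_le[OF c \<open>x \<in> P\<close>, of j]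
      mem_k_chain_iff_rank_le[OF c \<open>x \<in> P\<close>, of "j - 1"] x j by auto
  then show "\<exists>x\<in>P. rank_of_chain c x = j" using \<open>x \<in> P\<close> by blast
qed

lemma rank_of_chain_of_rank:
  assumes "f \<in> ranks"
  shows "rank_of_chain (chain_of_rank f) = f"
proof
  fix x
  show "rank_of_chain (chain_of_rank f) x = f x"
  proof (cases "x \<in> P")
    case True
    then have "{i. i \<le> k \<and> x \<notin> chain_of_rank f ! i} = {..<f x}"
      using ranksD(2)[OF assms, of x] by (auto simp: chain_of_rank_nth)
    with True show ?thesis by (simp add: rank_of_chain_def)
  qed (simp add: rank_of_chain_def ranksD(1)[OF assms])
qed

lemma chain_of_rank_of_chain:
  assumes c: "c \<in> k_chains P le k"
  shows "chain_of_rank (rank_of_chain c) = c"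
proof (rule nth_equalityI)
  show "length (chain_of_rank (rank_of_chain c)) = length c"
    using c by (simp add: length_chain_of_rank k_chains_def)
  fix i assume "i < length (chain_of_rank (rank_of_chain c))"
  then have "i \<le> k" by (simp add: length_chain_of_rank)
  moreover have "c ! i \<subseteq> P"
    using k_chains_nth_in_order_ideals[OF c \<open>i \<le> k\<close>] by (simp add: order_ideals_def)
  ultimately show "chain_of_rank (rank_of_chain c) ! i = c ! i"
    using mem_k_chain_iff_rank_le[OF c] by (auto simp: chain_of_rank_nth)
qed

lemma bij_betw_chain_of_rank: "bij_betw chain_of_rank ranks (k_chains P le k)"
  by (rule bij_betw_byWitness[where f' = rank_of_chain])
     (auto simp: rank_of_chain_of_rank chain_of_rank_of_chain chain_of_rank_in_k_chains
        rank_of_chain_in_ranks)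

lemma expect_chain_prob_eq_sum_ranks:
  "expect P le (chain_prob P le k) T =
    (\<Sum>f\<in>ranks. \<Sum>i\<le>k. T {x\<in>P. f x \<le> i}) / (real (Suc k) * real (card (k_chains P le k)))"
proof -
  have "(\<Sum>c\<in>k_chains P le k. \<Sum>i\<le>k. T (c ! i)) = (\<Sum>f\<in>ranks. \<Sum>i\<le>k. T (chain_of_rank f ! i))"
    by (rule sum.reindex_bij_betw[OF bij_betw_chain_of_rank, symmetric])
  then show ?thesis
    by (simp add: expect_chain_prob[OF finite_P] chain_of_rank_nth)
qed

end

locale ideal_chains_at_point = finite_ideal_chains +
  fixes p :: 'a
  assumes p_in_P: "p \<in> P"
begin

definition below :: "'a set" where "below = {q\<in>P. le q p \<and> q \<noteq> p}"
definition above :: "'a set" where "above = {q\<in>P. le p q \<and> q \<noteq> p}"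

definition max_below :: "('a \<Rightarrow> nat) \<Rightarrow> nat" where
  "max_below f = Max (insert 0 (f ` below))"

definition min_above :: "('a \<Rightarrow> nat) \<Rightarrow> nat" where
  "min_above f = Min (insert (Suc k) (f ` above))"

lemma finite_below: "finite below" and finite_above: "finite above"
  using finite_P by (simp_all add: below_def above_def)

lemma max_below_le_iff: "max_below f \<le> i \<longleftrightarrow> (\<forall>q\<in>below. f q \<le> i)"
  by (simp add: max_below_def finite_below)

lemma less_min_above_iff: "i < Suc k \<Longrightarrow> i < min_above f \<longleftrightarrow> (\<forall>q\<in>above. i < f q)"
  by (simp add: min_above_def finite_above)

lemma le_max_below: "x \<in> below \<Longrightarrow> f x \<le> max_below f"
  using max_below_le_iff by blast

lemma min_above_le: "x \<in> above \<Longrightarrow> min_above f \<le> f x"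
  by (simp add: min_above_def finite_above)

lemma min_above_le_Suc: "min_above f \<le> Suc k"
  by (simp add: min_above_def finite_above)

lemma max_below_cases: "max_below f = 0 \<or> (\<exists>x\<in>below. max_below f = f x)"
  using Max_in[of "insert 0 (f ` below)"] finite_below by (auto simp: max_below_def)

lemma min_above_cases: "min_above f = Suc k \<or> (\<exists>x\<in>above. min_above f = f x)"
  using Min_in[of "insert (Suc k) (f ` above)"] finite_above by (auto simp: min_above_def)

lemma max_below_le_min_above:
  assumes f: "f \<in> ranks"
  shows "max_below f \<le> f p" "f p \<le> min_above f"
  using f p_in_P min_above_cases[of f] ranksD[OF f]
  by (auto simp: max_below_le_iff below_def above_def)

lemma toggle_plus_level:
  "toggle_plus P le p {x\<in>P. f x \<le> i} = (if i \<in> {max_below f..<f p} then 1 else 0)"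
proof -
  have "(\<forall>q\<in>P - {x\<in>P. f x \<le> i}. le q p \<longrightarrow> q = p) \<longleftrightarrow> (\<forall>q\<in>below. f q \<le> i)"
    by (auto simp: below_def)
  then show ?thesis using p_in_P by (simp add: toggle_plus_def max_below_le_iff)
qed

lemma toggle_minus_level:
  assumes "i \<le> k"
  shows "toggle_minus P le p {x\<in>P. f x \<le> i} = (if i \<in> {f p..<min_above f} then 1 else 0)"
proof -
  have "(\<forall>q\<in>{x\<in>P. f x \<le> i}. le p q \<longrightarrow> q = p) \<longleftrightarrow> (\<forall>q\<in>above. i < f q)"
    by (auto simp: above_def)
  then show ?thesis
    using p_in_P less_min_above_iff[of i f] assms by (auto simp: toggle_minus_def)
qed

lemma sum_toggle_plus:
  assumes "f \<in> ranks"
  shows "(\<Sum>i\<le>k. toggle_plus P le p {x\<in>P. f x \<le> i}) = real (f p - max_below f)"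
proof -
  have "{max_below f..<f p} \<subseteq> {..k}"
    using ranksD(2)[OF assms, of p] by auto
  then show ?thesis
    by (simp only: toggle_plus_level sum_indicator_atLeastLessThan[OF finite_atMost])
qed

lemma sum_toggle_minus:
  "(\<Sum>i\<le>k. toggle_minus P le p {x\<in>P. f x \<le> i}) = real (min_above f - f p)"
proof -
  have "{f p..<min_above f} \<subseteq> {..k}"
    using min_above_le_Suc[of f] by auto
  then show ?thesis
    by (simp add: toggle_minus_level sum_indicator_atLeastLessThan del: atLeastLessThan_iff)
qed

definition reflected_rank :: "('a \<Rightarrow> nat) \<Rightarrow> nat" where
  "reflected_rank f = max_below f + min_above f - f p"

definition covered_without_p :: "('a \<Rightarrow> nat) \<Rightarrow> bool" where
  "covered_without_p f \<longleftrightarrow> (\<forall>j\<in>{1..k}. \<exists>x\<in>P - {p}. f x = j)"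

definition relabel :: "('a \<Rightarrow> nat) \<Rightarrow> nat \<Rightarrow> nat" where
  "relabel f = (if covered_without_p f then id else move_level (f p) (reflected_rank f))"

definition reflect :: "('a \<Rightarrow> nat) \<Rightarrow> 'a \<Rightarrow> nat" where
  "reflect f x = (if x \<notin> P then 0 else if x = p then reflected_rank f else relabel f (f x))"

lemma reflected_rank_bounds:
  assumes "f \<in> ranks"
  shows "max_below f \<le> reflected_rank f" "reflected_rank f \<le> min_above f"
  using max_below_le_min_above[OF assms] by (auto simp: reflected_rank_def)

lemma not_covered_without_p:
  assumes f: "f \<in> ranks" and "\<not> covered_without_p f"
  shows "f p \<in> {1..k}" and "\<And>x. x \<in> P - {p} \<Longrightarrow> f x \<noteq> f p"
    and "max_below f < f p" and "f p < min_above f" and "reflected_rank f \<in> {1..k}"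
proof -
  obtain j where j: "j \<in> {1..k}" and missed: "\<And>x. x \<in> P - {p} \<Longrightarrow> f x \<noteq> j"
    using assms(2) by (auto simp: covered_without_p_def)
  then have "f p = j" using ranksD(4)[OF f j] by blast
  with j missed show fp: "f p \<in> {1..k}" and alone: "\<And>x. x \<in> P - {p} \<Longrightarrow> f x \<noteq> f p"
    by auto
  have "max_below f \<noteq> f p"
    using max_below_cases[of f] fp alone by (force simp: below_def)
  then show "max_below f < f p" using max_below_le_min_above[OF f] by simp
  have "min_above f \<noteq> f p"
    using min_above_cases[of f] fp alone by (force simp: above_def)
  then show "f p < min_above f" using max_below_le_min_above[OF f] by simp
  with \<open>max_below f < f p\<close> show "reflected_rank f \<in> {1..k}"
    using fp min_above_le_Suc[of f] by (auto simp: reflected_rank_def)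
qed

lemma reflect_p: "reflect f p = reflected_rank f"
  using p_in_P by (simp add: reflect_def)

lemma relabel_mono: "a \<le> b \<Longrightarrow> relabel f a \<le> relabel f b"
  by (simp add: relabel_def move_level_mono)

lemma relabel_fixes_neighbours:
  assumes f: "f \<in> ranks" and x: "x \<in> below \<union> above"
  shows "relabel f (f x) = f x"
proof (cases "covered_without_p f")
  case False
  note alone = not_covered_without_p[OF f False]
  have "x \<in> below \<Longrightarrow> f x < f p \<and> f x < reflected_rank f"
    using le_max_below[of x f] alone reflected_rank_bounds[OF f] by (auto simp: reflected_rank_def)
  moreover have "x \<in> above \<Longrightarrow> f p < f x \<and> reflected_rank f < f x"
    using min_above_le[of x f] alone reflected_rank_bounds[OF f] by (auto simp: reflected_rank_def)
  ultimately show ?thesis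
    using x False by (auto simp: relabel_def move_level_fixed_below move_level_fixed_above)
qed (simp add: relabel_def)

lemma reflect_neighbours: "f \<in> ranks \<Longrightarrow> x \<in> below \<union> above \<Longrightarrow> reflect f x = f x"
  using relabel_fixes_neighbours by (auto simp: reflect_def below_def above_def)

lemma max_below_reflect: "f \<in> ranks \<Longrightarrow> max_below (reflect f) = max_below f"
  unfolding max_below_def using reflect_neighbours[of f] by (metis UnI1 image_cong)

lemma min_above_reflect: "f \<in> ranks \<Longrightarrow> min_above (reflect f) = min_above f"
  unfolding min_above_def using reflect_neighbours[of f] by (metis UnI2 image_cong)

lemma reflected_rank_reflect: "f \<in> ranks \<Longrightarrow> reflected_rank (reflect f) = f p"
  using max_below_le_min_above[of f] reflected_rank_bounds[of f]
  by (simp add: reflected_rank_def reflect_p max_below_reflect min_above_reflect)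

lemma reflect_mono:
  assumes f: "f \<in> ranks" and "x \<in> P" "y \<in> P" "le x y"
  shows "reflect f x \<le> reflect f y"
proof -
  consider "x = p" "y = p" | "x = p" "y \<in> above" | "x \<in> below" "y = p"
    | "x \<in> P - {p}" "y \<in> P - {p}"
    using assms by (auto simp: below_def above_def)
  then show ?thesis
  proof cases
    case 2
    then show ?thesis using min_above_le[of y f] reflected_rank_bounds[OF f]
      by (simp add: reflect_p reflect_neighbours[OF f])
  next
    case 3
    then show ?thesis using le_max_below[of x f] reflected_rank_bounds[OF f]
      by (simp add: reflect_p reflect_neighbours[OF f])
  next
    case 4
    then show ?thesis using ranksD(3)[OF f assms(2-4)] relabel_mono by (simp add: reflect_def)
  qed simp
qed

lemma reflect_attains:
  assumes f: "f \<in> ranks" and j: "j \<in> {1..k}"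
  shows "\<exists>x\<in>P. reflect f x = j"
proof (cases "covered_without_p f")
  case True
  then obtain x where "x \<in> P - {p}" "f x = j" using j unfolding covered_without_p_def by blast
  then show ?thesis using True by (intro bexI[of _ x]) (auto simp: reflect_def relabel_def)
next
  case False
  note alone = not_covered_without_p[OF f False]
  show ?thesis
  proof (cases "j = reflected_rank f")
    case True
    then show ?thesis using p_in_P reflect_p by blast
  next
    case False
    then obtain y where y: "y \<in> {1..k}" "y \<noteq> f p" "move_level (f p) (reflected_rank f) y = j"
      using move_level_surj[of j "reflected_rank f" 1 k "f p"] j alone(1,5) by blast
    obtain x where "x \<in> P" "f x = y" using ranksD(4)[OF f y(1)] by blast
    with y \<open>\<not> covered_without_p f\<close> show ?thesis
      by (intro bexI[of _ x]) (auto simp: reflect_def relabel_def)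
  qed
qed

lemma reflect_in_ranks:
  assumes f: "f \<in> ranks"
  shows "reflect f \<in> ranks"
proof -
  have "reflect f x \<le> Suc k" for x
    using reflected_rank_bounds[OF f] min_above_le_Suc[of f] ranksD(2)[OF f, of x]
      ranksD(2)[OF f, of p]
    by (auto simp: reflect_def relabel_def move_level_le)
  moreover have "x \<notin> P \<Longrightarrow> reflect f x = 0" for x by (simp add: reflect_def)
  ultimately show ?thesis
    unfolding ranks_def using reflect_mono[OF f] reflect_attains[OF f] by blast
qed


lemma covered_without_p_reflect:
  assumes f: "f \<in> ranks"
  shows "covered_without_p (reflect f) \<longleftrightarrow> covered_without_p f"
proof (cases "covered_without_p f")
  case True
  then have "\<forall>x\<in>P - {p}. reflect f x = f x" by (simp add: reflect_def relabel_def)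
  then show ?thesis using True unfolding covered_without_p_def by metis
next
  case False
  note alone = not_covered_without_p[OF f False]
  have "reflect f x \<noteq> reflected_rank f" if "x \<in> P - {p}" for x
    using that alone(2)[OF that] False by (simp add: reflect_def relabel_def move_level_neq)
  then show ?thesis using False alone(5) unfolding covered_without_p_def by blast
qed

lemma relabel_reflect_relabel:
  assumes f: "f \<in> ranks" and x: "x \<in> P - {p}"
  shows "relabel (reflect f) (relabel f (f x)) = f x"
proof (cases "covered_without_p f")
  case False
  then have "relabel (reflect f) = move_level (reflected_rank f) (f p)"
    using covered_without_p_reflect[OF f]
    by (simp add: relabel_def reflect_p reflected_rank_reflect[OF f])
  then show ?thesis
    using False not_covered_without_p(2)[OF f False x] by (simp add: relabel_def move_level_inverse)
qed (simp add: relabel_def covered_without_p_reflect[OF f])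

lemma reflect_reflect:
  assumes f: "f \<in> ranks"
  shows "reflect (reflect f) = f"
proof
  fix x
  consider "x \<notin> P" | "x = p" | "x \<in> P - {p}" by blast
  then show "reflect (reflect f) x = f x"
  proof cases
    case 1
    then show ?thesis by (simp add: reflect_def ranksD(1)[OF f])
  next
    case 2
    then show ?thesis by (simp add: reflect_p reflected_rank_reflect[OF f])
  next
    case 3
    then show ?thesis using relabel_reflect_relabel[OF f 3] by (simp add: reflect_def)
  qed
qed

lemma sum_gap_below_eq_sum_gap_above:
  "(\<Sum>f\<in>ranks. real (f p - max_below f)) = (\<Sum>f\<in>ranks. real (min_above f - f p))"
proof (rule sum.reindex_bij_witness[where i = reflect and j = reflect])
  fix f assume f: "f \<in> ranks"
  show "reflect (reflect f) = f" by (rule reflect_reflect[OF f])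
  show "reflect f \<in> ranks" by (rule reflect_in_ranks[OF f])
  show "real (min_above (reflect f) - reflect f p) = real (f p - max_below f)"
    using max_below_le_min_above[OF f]
    by (simp add: min_above_reflect[OF f] reflect_p reflected_rank_def)
qed (simp_all add: reflect_reflect reflect_in_ranks)

lemma toggle_balanced:
  "expect P le (chain_prob P le k) (toggle_plus P le p) =
   expect P le (chain_prob P le k) (toggle_minus P le p)"
  by (simp add: expect_chain_prob_eq_sum_ranks sum_toggle_plus sum_toggle_minus
      sum_gap_below_eq_sum_gap_above cong: sum.cong)

end

theorem lemma3p3:
  fixes P :: "'a set" and le :: "'a \<Rightarrow> 'a \<Rightarrow> bool" and k :: nat
  assumes "finite P" and "is_poset P le" and "k \<le> card P"
  shows "toggle_symmetric P le (chain_prob P le k)"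
proof -
  have "expect P le (chain_prob P le k) (toggle_plus P le p) =
        expect P le (chain_prob P le k) (toggle_minus P le p)" if "p \<in> P" for p
  proof -
    interpret ideal_chains_at_point P le k p
      using \<open>finite P\<close> \<open>p \<in> P\<close> by unfold_locales
    show ?thesis by (rule toggle_balanced)
  qed
  then show ?thesis by (simp add: toggle_symmetric_def)
qed

end
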